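(* Let $S$ be a bottomed linearly ordered set with $\omega_0\le\chi(S)$. Define $I\colon S\to\mathbb{H}(S)$ by $I(s)=e_{\mathcal{H}((S^* )^{\mathrm{op}}),\,W_S(s)}$ if $\perp_S<s$ and $I(\perp_S)=0$. Then $I$ is an isotone embedding (injective and order preserving) whose image is a g-characteristic subset of the linearly ordered Abelian group $\mathbb{H}(S)$, i.e. $0$ lies in the image and for every $f\in\mathbb{H}(S)$ with $f>0$ there exists $s\in S^*$ with $0<I(s)<f$.
   Context: A bottomed linearly ordered set $S$ has a least element $\perp_S$; $S^*=S\setminus\{\perp_S\}$. The character $\chi(S)$ is the least cardinal $\kappa>0$ such that some strictly decreasing family $(s_\alpha)_{\alpha<\kappa}$ in $S^*$ has every $t\in S^*$ bounded below by some $s_\alpha$. For a linearly ordered set $L$, $L^{\mathrm{op}}$ is $L$ with the reversed order. A subset of $L$ is dually well-ordered if each of its non-empty subsets has a maximum. The Hahn group $\mathcal{H}(L)$ is the set of maps $f\colon L\to\mathbb{R}$ whose support $\{x:f(x)\ne0\}$ is dually well-ordered, with pointwise addition and order $f<g$ iff $f\neq g$ and $f(\theta)<g(\theta)$ where $\theta=\max\{x:f(x)\ne g(x)\}$; it is a linearly ordered Abelian group. For $s\in L$, $e_{L,s}\in\mathcal{H}(L)$ is the function with $e_{L,s}(s)=1$ and $e_{L,s}(x)=0$ for $x\ne s$. For a linearly ordered Abelian group $G$, the Hahn field $\mathcal{H}(G)$ is the Hahn group with the product $(fg)(x)=\sum_{a+b=x}f(a)g(b)$. Define $\mathbb{H}(S)$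 to be the Hahn field of the linearly ordered Abelian group $\mathcal{H}((S^* )^{\mathrm{op}})$, and $W_S\colon S^*\to\mathcal{H}((S^* )^{\mathrm{op}})$ by $W_S(s)=-e_{(S^* )^{\mathrm{op}},s}$. *)

theory Defs
  imports Main HOL.Real
begin

definition dually_wo :: "('b \<Rightarrow> 'b \<Rightarrow> bool) \<Rightarrow> 'b set \<Rightarrow> bool" where
  "dually_wo le A \<longleftrightarrow> (\<forall>B\<subseteq>A. B \<noteq> {} \<longrightarrow> (\<exists>m\<in>B. \<forall>x\<in>B. le x m))"

text \<open>Hahn group of the linearly ordered set (L, le): real-valued maps on L
(represented as maps vanishing outside L) with dually well-ordered support.\<close>
definition hahn :: "'b set \<Rightarrow> ('b \<Rightarrow> 'b \<Rightarrow> bool) \<Rightarrow> ('b \<Rightarrow> real) set" where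
  "hahn L le = {f. (\<forall>x. x \<notin> L \<longrightarrow> f x = 0) \<and> dually_wo le {x. f x \<noteq> 0}}"

definition hahn_less :: "('b \<Rightarrow> 'b \<Rightarrow> bool) \<Rightarrow> ('b \<Rightarrow> real) \<Rightarrow> ('b \<Rightarrow> real) \<Rightarrow> bool" where
  "hahn_less le f g \<longleftrightarrow> f \<noteq> g \<and>
     (\<exists>\<theta>. f \<theta> \<noteq> g \<theta> \<and> (\<forall>x. f x \<noteq> g x \<longrightarrow> le x \<theta>) \<and> f \<theta> < g \<theta>)"

definition hahn_le :: "('b \<Rightarrow> 'b \<Rightarrow> bool) \<Rightarrow> ('b \<Rightarrow> real) \<Rightarrow> ('b \<Rightarrow> real) \<Rightarrow> bool" where
  "hahn_le le f g \<longleftrightarrow> f = g \<or> hahn_less le f g"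

definition unit_at :: "'b \<Rightarrow> ('b \<Rightarrow> real)" where
  "unit_at s = (\<lambda>x. if x = s then 1 else 0)"

text \<open>A bottomed linearly ordered set is modelled as a type of class
linorder + order_bot; S* = S minus bottom.\<close>
definition Sstar :: "'a::{linorder,order_bot} set" where
  "Sstar = {s. bot < s}"

definition op_le :: "'a::linorder \<Rightarrow> 'a \<Rightarrow> bool" where
  "op_le x y \<longleftrightarrow> y \<le> x"

definition GS :: "('a::{linorder,order_bot} \<Rightarrow> real) set" where
  "GS = hahn Sstar op_le"

definition GS_le :: "('a::{linorder,order_bot} \<Rightarrow> real) \<Rightarrow> ('a \<Rightarrow> real) \<Rightarrow> bool" where
  "GS_le = hahn_le op_le"

text \<open>The Hahn field H(S) = H(G) (as an ordered set; only the order and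
additive structure are relevant for the statement).\<close>
definition HS :: "(('a::{linorder,order_bot} \<Rightarrow> real) \<Rightarrow> real) set" where
  "HS = hahn GS GS_le"

definition HS_less :: "(('a::{linorder,order_bot} \<Rightarrow> real) \<Rightarrow> real) \<Rightarrow> (('a \<Rightarrow> real) \<Rightarrow> real) \<Rightarrow> bool" where
  "HS_less = hahn_less GS_le"

definition W_S :: "'a::{linorder,order_bot} \<Rightarrow> ('a \<Rightarrow> real)" where
  "W_S s = (\<lambda>x. - unit_at s x)"

definition I_S :: "'a::{linorder,order_bot} \<Rightarrow> (('a \<Rightarrow> real) \<Rightarrow> real)" where
  "I_S s = (if bot < s then unit_at (W_S s) else (\<lambda>_. 0))"

definition coinitial_dec_family :: "nat \<Rightarrow> (nat \<Rightarrow> 'a::{linorder,order_bot}) \<Rightarrow> bool" where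
  "coinitial_dec_family n x \<longleftrightarrow>
     (\<forall>i<n. x i \<in> Sstar) \<and> (\<forall>i j. i < j \<and> j < n \<longrightarrow> x j < x i) \<and>
     (\<forall>t\<in>Sstar. \<exists>i<n. x i \<le> t)"

text \<open>omega_0 \<le> chi(S): chi(S) is defined (S* nonempty) and is not a
finite (positive) cardinal.\<close>
definition char_ge_omega :: "'a::{linorder,order_bot} itself \<Rightarrow> bool" where
  "char_ge_omega _ \<longleftrightarrow> (Sstar :: 'a set) \<noteq> {} \<and>
     \<not> (\<exists>n>0. \<exists>x::nat \<Rightarrow> 'a. coinitial_dec_family n x)"

end

theory Submission
  imports Defs
begin

text \<open>Because \<open>\<omega>\<^sub>0 \<le> \<chi>(S)\<close>, the set \<open>S\<^sup>*\<close> has no least element. The support of any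
  \<open>\<theta> \<in> \<H>((S\<^sup>*)\<^sup>o\<^sup>p)\<close> is dually well-ordered in the reversed order, so it has a least
  element in \<open>S\<close>, and some \<open>s \<in> S\<^sup>*\<close> lies strictly below it. Then \<open>W\<^sub>S(s) < \<theta>\<close>: the
  largest place (in the reversed order) where they differ is \<open>s\<close>, where \<open>W\<^sub>S(s)\<close> is \<open>-1\<close>
  and \<open>\<theta>\<close> is \<open>0\<close>. Taking for \<open>\<theta>\<close> the leading exponent of a positive \<open>f \<in> \<bbbH>(S)\<close>, the
  monomial \<open>I(s)\<close> is positive with a smaller leading exponent, so \<open>0 < I(s) < f\<close>.\<close>

lemma hahn_lessI:
  assumes "f \<theta> < g \<theta>" and "\<And>x. f x \<noteq> g x \<Longrightarrow> le x \<theta>"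
  shows "hahn_less le f g"
  unfolding hahn_less_def using assms by (metis less_irrefl)

lemma hahn_less_imp_neq: "hahn_less le f g \<Longrightarrow> f \<noteq> g"
  by (simp add: hahn_less_def)

lemma hahn_le_refl: "hahn_le le f f"
  by (simp add: hahn_le_def)

lemma hahn_less_imp_le: "hahn_less le f g \<Longrightarrow> hahn_le le f g"
  by (simp add: hahn_le_def)

lemma mem_hahn_if_support_subset_singleton:
  assumes "{x. f x \<noteq> 0} \<subseteq> {a}" and "a \<in> L" and "le a a"
  shows "f \<in> hahn L le"
  using assms unfolding hahn_def dually_wo_def by (auto simp: subset_singleton_iff)

lemma hahn_less_zero_unit_at: "le a a \<Longrightarrow> hahn_less le (\<lambda>_. 0) (unit_at a)"
  by (rule hahn_lessI[of _ a]) (auto simp: unit_at_def split: if_splits)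

lemma hahn_less_unit_at_unit_at:
  assumes "le a b" and "a \<noteq> b" and "le b b"
  shows "hahn_less le (unit_at a) (unit_at b)"
  using assms by (intro hahn_lessI[of _ b]) (auto simp: unit_at_def split: if_splits)

lemma hahn_less_unit_at_if_below_leading:
  assumes "0 < f \<theta>" and "\<And>x. f x \<noteq> 0 \<Longrightarrow> le x \<theta>" and "le a \<theta>" and "a \<noteq> \<theta>"
  shows "hahn_less le (unit_at a) f"
  using assms by (intro hahn_lessI[of _ \<theta>]) (auto simp: unit_at_def split: if_splits)

lemma hahn_less_neg_unit_at_neg_unit_at:
  assumes "le b a" and "a \<noteq> b" and "le a a"
  shows "hahn_less le (\<lambda>x. - unit_at a x) (\<lambda>x. - unit_at b x)"
  using assms by (intro hahn_lessI[of _ a]) (auto simp: unit_at_def split: if_splits)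

lemma hahn_less_neg_unit_at_if_above_support:
  assumes "g a = 0" and "\<And>x. g x \<noteq> 0 \<Longrightarrow> le x a" and "le a a"
  shows "hahn_less le (\<lambda>x. - unit_at a x) g"
  using assms by (intro hahn_lessI[of _ a]) (auto simp: unit_at_def split: if_splits)

lemma Sstar_no_least:
  assumes "char_ge_omega TYPE('a::{linorder,order_bot})" and "(m::'a) \<in> Sstar"
  obtains s where "s \<in> Sstar" and "s < m"
proof -
  have "\<not> coinitial_dec_family 1 (\<lambda>_. m)"
    using assms(1) by (auto simp: char_ge_omega_def)
  then show ?thesis
    using assms(2) that by (auto simp: coinitial_dec_family_def not_le)
qed

lemma Sstar_below_support:
  assumes "char_ge_omega TYPE('a::{linorder,order_bot})" and "(g::'a \<Rightarrow> real) \<in> GS"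
  obtains s where "s \<in> Sstar" and "\<And>x. g x \<noteq> 0 \<Longrightarrow> s < x"
proof (cases "{x. g x \<noteq> 0} = {}")
  case True
  moreover have "(Sstar::'a set) \<noteq> {}"
    using assms(1) by (simp add: char_ge_omega_def)
  ultimately show ?thesis
    using that by auto
next
  case False
  moreover have "dually_wo op_le {x. g x \<noteq> 0}" and outside: "\<And>x. x \<notin> Sstar \<Longrightarrow> g x = 0"
    using assms(2) by (auto simp: GS_def hahn_def)
  ultimately obtain m where "g m \<noteq> 0" and m_least: "\<And>x. g x \<noteq> 0 \<Longrightarrow> m \<le> x"
    unfolding dually_wo_def op_le_def by (metis (mono_tags) mem_Collect_eq order_refl)
  then obtain s where "s \<in> Sstar" and "s < m"
    using Sstar_no_least[OF assms(1)] outside by blast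
  then show ?thesis
    using that m_least by (meson less_le_trans)
qed

lemma W_S_in_GS: "bot < s \<Longrightarrow> W_S s \<in> GS"
  unfolding GS_def W_S_def
  by (rule mem_hahn_if_support_subset_singleton[of _ s]) (auto simp: unit_at_def Sstar_def op_le_def)

lemma W_S_less: "s < t \<Longrightarrow> hahn_less op_le (W_S s) (W_S t)"
  unfolding W_S_def by (rule hahn_less_neg_unit_at_neg_unit_at) (auto simp: op_le_def)

lemma W_S_below:
  assumes "char_ge_omega TYPE('a::{linorder,order_bot})" and "(\<theta>::'a \<Rightarrow> real) \<in> GS"
  obtains s where "s \<in> Sstar" and "hahn_less op_le (W_S s) \<theta>"
proof -
  obtain s where "s \<in> Sstar" and below: "\<And>x. \<theta> x \<noteq> 0 \<Longrightarrow> s < x"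
    using Sstar_below_support[OF assms] by blast
  moreover have "hahn_less op_le (W_S s) \<theta>"
    unfolding W_S_def
    by (rule hahn_less_neg_unit_at_if_above_support)
      (use below in \<open>auto simp: op_le_def less_imp_le\<close>)
  ultimately show ?thesis
    using that by blast
qed

lemma I_S_in_HS: "I_S s \<in> HS"
proof (cases "bot < s")
  case True
  then show ?thesis
    unfolding HS_def I_S_def
    by (intro mem_hahn_if_support_subset_singleton[of _ "W_S s"])
      (auto simp: unit_at_def W_S_in_GS GS_le_def hahn_le_refl)
qed (simp add: HS_def I_S_def hahn_def dually_wo_def)

lemma I_S_pos: "bot < s \<Longrightarrow> HS_less (\<lambda>_. 0) (I_S s)"
  by (simp add: I_S_def HS_less_def GS_le_def hahn_le_refl hahn_less_zero_unit_at)

lemma I_S_strict_mono: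
  assumes "s < t"
  shows "HS_less (I_S s) (I_S t)"
proof -
  have "bot < t"
    using assms bot.extremum_strict bot.not_eq_extremum by fastforce
  moreover have "HS_less (unit_at (W_S s)) (unit_at (W_S t))"
    unfolding HS_less_def GS_le_def
    using W_S_less[OF assms]
    by (intro hahn_less_unit_at_unit_at) (auto dest: hahn_less_imp_le hahn_less_imp_neq simp: hahn_le_refl)
  ultimately show ?thesis
    using I_S_pos[of t] by (simp add: I_S_def)
qed

lemma I_S_between:
  assumes "char_ge_omega TYPE('a::{linorder,order_bot})"
    and "(f :: ('a \<Rightarrow> real) \<Rightarrow> real) \<in> HS" and "HS_less (\<lambda>_. 0) f"
  obtains s where "s \<in> Sstar" and "HS_less (\<lambda>_. 0) (I_S s)" and "HS_less (I_S s) f"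
proof -
  obtain \<theta> where "0 < f \<theta>" and leading: "\<And>x. f x \<noteq> 0 \<Longrightarrow> GS_le x \<theta>"
    using assms(3) unfolding HS_less_def hahn_less_def by auto
  then have "\<theta> \<in> GS"
    using assms(2) by (auto simp: HS_def hahn_def)
  then obtain s where s: "s \<in> Sstar" and W_less: "hahn_less op_le (W_S s) \<theta>"
    using W_S_below[OF assms(1)] by blast
  have "HS_less (unit_at (W_S s)) f"
    unfolding HS_less_def
    using \<open>0 < f \<theta>\<close> leading W_less
    by (intro hahn_less_unit_at_if_below_leading)
      (auto simp: GS_le_def dest: hahn_less_imp_le hahn_less_imp_neq)
  moreover have "bot < s"
    using s by (simp add: Sstar_def)
  ultimately show ?thesis
    using that[OF s] I_S_pos[of s] by (simp add: I_S_def)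
qed

theorem proposition2p24:
  assumes "char_ge_omega TYPE('a::{linorder,order_bot})"
  shows "(\<forall>s::'a. I_S s \<in> HS)
    \<and> inj (I_S :: 'a \<Rightarrow> _)
    \<and> (\<forall>s t::'a. s < t \<longrightarrow> HS_less (I_S s) (I_S t))
    \<and> (\<lambda>_. 0) \<in> range (I_S :: 'a \<Rightarrow> _)
    \<and> (\<forall>f\<in>(HS :: (('a \<Rightarrow> real) \<Rightarrow> real) set). HS_less (\<lambda>_. 0) f \<longrightarrow>
         (\<exists>s\<in>(Sstar :: 'a set). HS_less (\<lambda>_. 0) (I_S s) \<and> HS_less (I_S s) f))"
proof (intro conjI allI impI ballI)
  show "inj (I_S :: 'a \<Rightarrow> _)"
    by (rule injI, rule ccontr)
      (metis linorder_neqE I_S_strict_mono HS_less_def hahn_less_imp_neq)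
  show "(\<lambda>_. 0) \<in> range (I_S :: 'a \<Rightarrow> _)"
    by (rule range_eqI[of _ _ bot]) (simp add: I_S_def)
  show "\<exists>s\<in>Sstar. HS_less (\<lambda>_. 0) (I_S s) \<and> HS_less (I_S s) f"
    if "f \<in> HS" and "HS_less (\<lambda>_. 0) f" for f :: "('a \<Rightarrow> real) \<Rightarrow> real"
    using I_S_between[OF assms that] by blast
qed (simp_all add: I_S_in_HS I_S_strict_mono)

end
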